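(* Let $K^{\mathsf{m}},K^{\mathsf{v}}$ be positive-definite kernels on $\mathcal{X}$ with RKHSs $\mathcal{H}^{\mathsf{m}},\mathcal{H}^{\mathsf{v}}$ and feature maps $\phi^{\mathsf{m}}_x=K^{\mathsf{m}}(x,\cdot)$, $\phi^{\mathsf{v}}_x=K^{\mathsf{v}}(x,\cdot)$. Let $(x_i,y_i)\in\mathcal{X}\times\mathbb{R}$, $i=1,\dots,n$, let $\mathbf{K}^{\mathsf{m}},\mathbf{K}^{\mathsf{v}}\in\mathbb{S}^{n\times n}$ be the kernel matrices $\mathbf{K}^{\mathsf{m}}_{ij}=K^{\mathsf{m}}(x_i,x_j)$, $\mathbf{K}^{\mathsf{v}}_{ij}=K^{\mathsf{v}}(x_i,x_j)$, with $i$-th columns $\mathsf{K}^{\mathsf{m}}_i,\mathsf{K}^{\mathsf{v}}_i$, and let $\gamma\ge0$. Consider the finite-dimensional program $$(\mathrm{P}_n)\quad\min_{\alpha\in\mathbb{R}^n,\ \mathbf{B}\in\mathbb{S}^{n\times n}}\ \gamma\langle\alpha,\mathbf{K}^{\mathsf{m}}\alpha\rangle+\operatorname{Tr}(\mathbf{K}^{\mathsf{v}}\mathbf{B})\quad\text{s.t.}\quad\langle\mathsf{K}^{\mathsf{v}}_i,\mathbf{B}\mathsf{K}^{\mathsf{v}}_i\rangle\ge\big(y_i-\langle\mathsf{K}^{\mathsf{m}}_i,\alpha\rangle\big)^2\ \forall i,\ \ \mathbf{B}\succeq0,$$ and the infinite-dimensional program $$(\mathrm{P}_\infty)\quad\min_{\beta\in\mathcal{H}^{\mathsf{m}},\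 \mathbf{A}:\mathcal{H}^{\mathsf{v}}\to\mathcal{H}^{\mathsf{v}}}\ \gamma\|\beta\|^2_{\mathcal{H}^{\mathsf{m}}}+\|\mathbf{A}\|_\star\quad\text{s.t.}\quad\langle\phi^{\mathsf{v}}_{x_i},\mathbf{A}\phi^{\mathsf{v}}_{x_i}\rangle_{\mathcal{H}^{\mathsf{v}}}\ge\big(y_i-\langle\phi^{\mathsf{m}}_{x_i},\beta\rangle_{\mathcal{H}^{\mathsf{m}}}\big)^2\ \forall i,\ \ \mathbf{A}\succeq0.$$ Then the two programs are equivalent: they have the same optimal value, the map $(\alpha,\mathbf{B})\mapsto(\beta,\mathbf{A})$ with $\beta=\sum_i\alpha_i\phi^{\mathsf{m}}_{x_i}$ and $\mathbf{A}=\sum_{i,j}\mathbf{B}_{ij}\,\phi^{\mathsf{v}}_{x_i}\otimes\phi^{\mathsf{v}}_{x_j}$ sends feasible points of $(\mathrm{P}_n)$ to feasible points of $(\mathrm{P}_\infty)$ with the same objective value, and $(\mathrm{P}_\infty)$ has an optimal solution of this form (in particular optimal solutions of $(\mathrm{P}_n)$ are mapped to optimal solutions of $(\mathrm{P}_\infty)$).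
   Context: $\|\mathbf{A}\|_\star$ is the nuclear (trace) norm; for $\mathbf{A}\succeq0$ it equals $\operatorname{Tr}(\mathbf{A})$. For $u,v\in\mathcal{H}$, $u\otimes v$ denotes the rank-one operator $h\mapsto\langle v,h\rangle_{\mathcal{H}}u$. $\mathbf{A}\succeq0$ means $\mathbf{A}$ is a positive semi-definite (self-adjoint) operator. *)

theory Defs
  imports "HOL-Analysis.Analysis"
begin

definition tensor_op :: "'h::real_inner \<Rightarrow> 'h \<Rightarrow> ('h \<Rightarrow> 'h)" where
  "tensor_op u v = (\<lambda>h. inner v h *\<^sub>R u)"

definition psd_op :: "('h::real_inner \<Rightarrow> 'h) \<Rightarrow> bool" where
  "psd_op A \<longleftrightarrow> bounded_linear A \<and> (\<forall>u v. inner (A u) v = inner u (A v))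
      \<and> (\<forall>u. 0 \<le> inner u (A u))"

definition orthonormal_list :: "'h::real_inner list \<Rightarrow> bool" where
  "orthonormal_list es \<longleftrightarrow> (\<forall>i<length es. \<forall>j<length es.
      inner (es ! i) (es ! j) = (if i = j then 1 else 0))"

definition nuclear_norm :: "('h::real_inner \<Rightarrow> 'h) \<Rightarrow> ereal" where
  "nuclear_norm A = (SUP p \<in> {(es, fs). orthonormal_list es \<and> orthonormal_list fs
        \<and> length es = length fs}.
      ereal (\<Sum>k<length (fst p). \<bar>inner (snd p ! k) (A (fst p ! k))\<bar>))"

definition psd_mat :: "real^'n^'n \<Rightarrow> bool" where
  "psd_mat B \<longleftrightarrow> transpose B = B \<and> (\<forall>v. 0 \<le> v \<bullet> (B *v v))"

definition kmat :: "('x \<Rightarrow> 'x \<Rightarrow> real) \<Rightarrow> ('n::finite \<Rightarrow> 'x) \<Rightarrow> real^'n^'n" where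
  "kmat K x = (\<chi> i j. K (x i) (x j))"

definition Pn_feasible ::
  "('x \<Rightarrow> 'x \<Rightarrow> real) \<Rightarrow> ('x \<Rightarrow> 'x \<Rightarrow> real) \<Rightarrow> ('n::finite \<Rightarrow> 'x) \<Rightarrow> ('n \<Rightarrow> real)
     \<Rightarrow> real^'n \<Rightarrow> real^'n^'n \<Rightarrow> bool" where
  "Pn_feasible Km Kv x y \<alpha> B \<longleftrightarrow> psd_mat B \<and>
     (\<forall>i. column i (kmat Kv x) \<bullet> (B *v column i (kmat Kv x))
            \<ge> (y i - column i (kmat Km x) \<bullet> \<alpha>)\<^sup>2)"

definition Pn_obj ::
  "real \<Rightarrow> ('x \<Rightarrow> 'x \<Rightarrow> real) \<Rightarrow> ('x \<Rightarrow> 'x \<Rightarrow> real) \<Rightarrow> ('n::finite \<Rightarrow> 'x)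
     \<Rightarrow> real^'n \<Rightarrow> real^'n^'n \<Rightarrow> real" where
  "Pn_obj \<gamma> Km Kv x \<alpha> B = \<gamma> * (\<alpha> \<bullet> (kmat Km x *v \<alpha>)) + trace (kmat Kv x ** B)"

definition Pn_val ::
  "real \<Rightarrow> ('x \<Rightarrow> 'x \<Rightarrow> real) \<Rightarrow> ('x \<Rightarrow> 'x \<Rightarrow> real) \<Rightarrow> ('n::finite \<Rightarrow> 'x)
     \<Rightarrow> ('n \<Rightarrow> real) \<Rightarrow> ereal" where
  "Pn_val \<gamma> Km Kv x y = (INF p \<in> {(\<alpha>, B). Pn_feasible Km Kv x y \<alpha> B}.
      ereal (Pn_obj \<gamma> Km Kv x (fst p) (snd p)))"

definition Pinf_feasible ::
  "('x \<Rightarrow> 'hm::real_inner) \<Rightarrow> ('x \<Rightarrow> 'hv::real_inner) \<Rightarrow> ('n::finite \<Rightarrow> 'x) \<Rightarrow> ('n \<Rightarrow> real)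
     \<Rightarrow> 'hm \<Rightarrow> ('hv \<Rightarrow> 'hv) \<Rightarrow> bool" where
  "Pinf_feasible \<phi>m \<phi>v x y \<beta> A \<longleftrightarrow> psd_op A \<and>
     (\<forall>i. inner (\<phi>v (x i)) (A (\<phi>v (x i))) \<ge> (y i - inner (\<phi>m (x i)) \<beta>)\<^sup>2)"

definition Pinf_obj :: "real \<Rightarrow> 'hm::real_inner \<Rightarrow> ('hv::real_inner \<Rightarrow> 'hv) \<Rightarrow> ereal" where
  "Pinf_obj \<gamma> \<beta> A = ereal (\<gamma> * (norm \<beta>)\<^sup>2) + nuclear_norm A"

definition Pinf_val ::
  "real \<Rightarrow> ('x \<Rightarrow> 'hm::real_inner) \<Rightarrow> ('x \<Rightarrow> 'hv::real_inner) \<Rightarrow> ('n::finite \<Rightarrow> 'x)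
     \<Rightarrow> ('n \<Rightarrow> real) \<Rightarrow> ereal" where
  "Pinf_val \<gamma> \<phi>m \<phi>v x y = (INF p \<in> {(\<beta>, A). Pinf_feasible \<phi>m \<phi>v x y \<beta> A}.
      Pinf_obj \<gamma> (fst p) (snd p))"

definition embed_beta :: "('x \<Rightarrow> 'hm::real_vector) \<Rightarrow> ('n::finite \<Rightarrow> 'x) \<Rightarrow> real^'n \<Rightarrow> 'hm" where
  "embed_beta \<phi>m x \<alpha> = (\<Sum>i\<in>UNIV. (\<alpha> $ i) *\<^sub>R \<phi>m (x i))"

definition embed_A :: "('x \<Rightarrow> 'hv::real_inner) \<Rightarrow> ('n::finite \<Rightarrow> 'x) \<Rightarrow> real^'n^'n \<Rightarrow> ('hv \<Rightarrow> 'hv)" where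
  "embed_A \<phi>v x B = (\<lambda>h. \<Sum>i\<in>UNIV. \<Sum>j\<in>UNIV. (B $ i $ j) *\<^sub>R tensor_op (\<phi>v (x i)) (\<phi>v (x j)) h)"

end

theory Submission
  imports Defs
begin

(*
  Both programs only see the features at the data points, so everything happens in the finite-
  dimensional spans of the vectors phi_m(x_i) and phi_v(x_i).  A feasible (alpha, B) of (P_n) is sent
  to beta = sum_i alpha_i phi_m(x_i) and A = sum_ij B_ij phi_v(x_i) (x) phi_v(x_j): the constraints
  become those of (P_inf), and since A is positive with range in the span V of the phi_v(x_i), its
  nuclear norm is its trace over an orthonormal basis of V, namely Tr(K^v B).  Conversely, a feasible
  (beta, A) of (P_inf) may be replaced by the projection P beta and the compression P A P onto the
  feature spans: the constraints are unchanged because the features are fixed by P, the objective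
  does not increase because norm (P beta) <= norm beta and Tr(P A P) <= nuclear_norm A, and P A P is
  again of the embedded form.  A minimiser of (P_n) exists because
  compressing a point of a sublevel set yields one whose coefficients are bounded in terms of the
  level, so the infimum is attained on a compact set.
*)

section \<open>Finite orthonormal sets\<close>

definition orthonormal_set :: "'a::real_inner set \<Rightarrow> bool" where
  "orthonormal_set E \<longleftrightarrow> finite E \<and> pairwise orthogonal E \<and> (\<forall>e\<in>E. norm e = 1)"

definition orth_proj :: "'a::real_inner set \<Rightarrow> 'a \<Rightarrow> 'a" where
  "orth_proj E u = (\<Sum>e\<in>E. inner e u *\<^sub>R e)"

lemma orthonormal_set_inner:
  assumes "orthonormal_set E" "e \<in> E" "e' \<in> E"
  shows "inner e e' = (if e = e' then 1 else 0)"
  using assms by (auto simp: orthonormal_set_def pairwise_def orthogonal_def norm_eq_1)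

lemma orthonormal_set_exists:
  fixes T :: "'a::real_inner set"
  assumes "finite T"
  obtains E where "orthonormal_set E" "span E = span T"
proof -
  obtain C where C: "finite C" "span C = span T" "pairwise orthogonal C"
    using basis_orthogonal[OF assms] by blast
  define E where "E = (\<lambda>u. (1 / norm u) *\<^sub>R u) ` (C - {0})"
  have "span E = span (C - {0})"
    unfolding E_def using C(1) by (intro span_image_scale) auto
  also have "\<dots> = span T"
    using C(2) by (metis span_insert_0 insert_Diff_single)
  finally have "span E = span T" .
  moreover have "pairwise orthogonal E"
    using C(3) by (auto simp: E_def pairwise_def orthogonal_def)
  moreover have "finite E" "\<forall>e\<in>E. norm e = 1"
    using C(1) by (auto simp: E_def)
  ultimately show ?thesis
    using that by (simp add: orthonormal_set_def)
qed

lemma inner_orth_proj_left: "inner (orth_proj E u) w = (\<Sum>e\<in>E. inner e u * inner e w)"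
  by (simp add: orth_proj_def inner_sum_left)

lemma inner_orth_proj_right: "inner w (orth_proj E u) = (\<Sum>e\<in>E. inner e u * inner e w)"
  by (simp add: orth_proj_def inner_sum_right inner_commute)

lemma inner_orth_proj_basis:
  assumes "orthonormal_set E" "e \<in> E"
  shows "inner e (orth_proj E u) = inner e u"
proof -
  have "inner e (orth_proj E u) = (\<Sum>e'\<in>E. if e' = e then inner e' u else 0)"
    unfolding inner_orth_proj_right using assms
    by (intro sum.cong) (auto simp: orthonormal_set_inner inner_commute)
  also have "\<dots> = inner e u"
    using assms by (simp add: orthonormal_set_def)
  finally show ?thesis .
qed

lemma orth_proj_eq_self:
  assumes "orthonormal_set E" "u \<in> span E"
  shows "orth_proj E u = u"
  using orthonormal_basis_expand[of E u] assms
  by (simp add: orthonormal_set_def orth_proj_def inner_commute)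

lemma parseval_orthonormal_set:
  assumes "orthonormal_set E" "u \<in> span E"
  shows "inner u w = (\<Sum>e\<in>E. inner e u * inner e w)"
  using inner_orth_proj_left[of E u w] orth_proj_eq_self[OF assms] by simp

lemma inner_orth_proj_span:
  assumes "orthonormal_set E" "u \<in> span E"
  shows "inner u (orth_proj E w) = inner u w"
  using parseval_orthonormal_set[OF assms, of w] by (simp add: inner_orth_proj_right mult.commute)

lemma inner_diff_orth_proj:
  assumes "orthonormal_set E"
  shows "inner (u - orth_proj E u) (w - orth_proj E w) = inner u w - (\<Sum>e\<in>E. inner e u * inner e w)"
proof -
  have "inner (orth_proj E u) (orth_proj E w) = (\<Sum>e\<in>E. inner e u * inner e w)"
    unfolding inner_orth_proj_left using assms by (simp add: inner_orth_proj_basis cong: sum.cong)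
  moreover have "inner u (orth_proj E w) = (\<Sum>e\<in>E. inner e u * inner e w)"
    by (simp add: inner_orth_proj_right mult.commute)
  ultimately show ?thesis
    by (simp add: inner_diff inner_orth_proj_left)
qed

lemma norm_orth_proj_le:
  assumes "orthonormal_set E"
  shows "norm (orth_proj E u) \<le> norm u"
proof -
  have "0 \<le> inner (u - orth_proj E u) (u - orth_proj E u)" by simp
  then have "inner (orth_proj E u) (orth_proj E u) \<le> inner u u"
    using assms by (simp add: inner_diff_orth_proj inner_orth_proj_left inner_orth_proj_basis cong: sum.cong)
  then show ?thesis
    by (simp add: norm_eq_sqrt_inner)
qed

lemma orthonormal_list_imp_set:
  assumes "orthonormal_list es"
  shows "distinct es" "orthonormal_set (set es)"
proof -
  have es: "i < length es \<Longrightarrow> j < length es \<Longrightarrow> inner (es ! i) (es ! j) = (if i = j then 1 else 0)"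
    for i j using assms by (simp add: orthonormal_list_def)
  show "distinct es"
    unfolding distinct_conv_nth using es by (metis zero_neq_one)
  moreover have "pairwise orthogonal (set es)"
    unfolding pairwise_def orthogonal_def set_conv_nth using es by fastforce
  moreover have "\<forall>e\<in>set es. norm e = 1"
    unfolding set_conv_nth using es by (auto simp: norm_eq_1)
  ultimately show "orthonormal_set (set es)"
    by (simp add: orthonormal_set_def)
qed

lemma orthonormal_set_imp_list:
  assumes "orthonormal_set E"
  obtains es where "orthonormal_list es" "distinct es" "set es = E"
proof -
  obtain es where es: "set es = E" "distinct es"
    using assms finite_distinct_list by (auto simp: orthonormal_set_def)
  have "orthonormal_list es"
    unfolding orthonormal_list_def using assms es
    by (auto simp: orthonormal_set_inner nth_eq_iff_index_eq)
  with es that show ?thesis by blast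
qed

lemma sum_nth_distinct:
  assumes "distinct xs"
  shows "(\<Sum>k<length xs. f (xs ! k)) = (\<Sum>x\<in>set xs. f x)"
  using assms by (simp add: sum.distinct_set_conv_list sum_list_sum_nth atLeast0LessThan)

section \<open>Nuclear norm\<close>

lemma nuclear_norm_lower:
  assumes "orthonormal_list es" "orthonormal_list fs" "length es = length fs"
  shows "ereal (\<Sum>k<length es. \<bar>inner (fs ! k) (A (es ! k))\<bar>) \<le> nuclear_norm A"
  unfolding nuclear_norm_def by (rule SUP_upper2[where i = "(es, fs)"]) (use assms in auto)

lemma abs_inner_le_nuclear_norm:
  assumes "norm e = 1" "norm f = 1"
  shows "ereal \<bar>inner f (A e)\<bar> \<le> nuclear_norm A"
  using nuclear_norm_lower[of "[e]" "[f]" A] assms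
  by (simp add: orthonormal_list_def norm_eq_1)

lemma sum_inner_le_nuclear_norm:
  assumes "orthonormal_set E"
  shows "ereal (\<Sum>e\<in>E. inner e (A e)) \<le> nuclear_norm A"
proof -
  obtain es where es: "orthonormal_list es" "distinct es" "set es = E"
    using orthonormal_set_imp_list[OF assms] .
  have "(\<Sum>e\<in>E. inner e (A e)) \<le> (\<Sum>e\<in>E. \<bar>inner e (A e)\<bar>)"
    by (intro sum_mono) simp
  also have "\<dots> = (\<Sum>k<length es. \<bar>inner (es ! k) (A (es ! k))\<bar>)"
    using sum_nth_distinct[OF es(2), of "\<lambda>e. \<bar>inner e (A e)\<bar>"] es(3) by simp
  finally show ?thesis
    using nuclear_norm_lower[OF es(1) es(1) refl, of A] by (meson ereal_less_eq(3) order_trans)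
qed

lemma psd_op_abs_inner_le:
  assumes "psd_op A"
  shows "2 * \<bar>inner f (A e)\<bar> \<le> inner f (A f) + inner e (A e)"
proof -
  have lin: "linear A"
    using assms by (simp add: psd_op_def bounded_linear.linear)
  have "inner e (A f) = inner f (A e)"
    using assms by (metis psd_op_def inner_commute)
  then have "inner (f + e) (A (f + e)) = inner f (A f) + inner e (A e) + 2 * inner f (A e)"
       and "inner (f - e) (A (f - e)) = inner f (A f) + inner e (A e) - 2 * inner f (A e)"
    by (simp_all add: linear_add[OF lin] linear_diff[OF lin] inner_add inner_diff)
  moreover have "0 \<le> inner (f + e) (A (f + e))" "0 \<le> inner (f - e) (A (f - e))"
    using assms by (simp_all add: psd_op_def)
  ultimately show ?thesis by linarith
qed

text \<open>For a positive operator only diagonal pairs matter: by Cauchy--Schwarz for the form of A,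
  each pair of orthonormal lists is dominated by the mean of the traces along the two lists.\<close>

lemma nuclear_norm_psd_op_le:
  assumes A: "psd_op A" and tr: "\<And>E. orthonormal_set E \<Longrightarrow> (\<Sum>e\<in>E. inner e (A e)) \<le> t"
  shows "nuclear_norm A \<le> ereal t"
  unfolding nuclear_norm_def
proof (rule SUP_least, clarify)
  fix es fs :: "'a list"
  assume es: "orthonormal_list es" and fs: "orthonormal_list fs" and len: "length es = length fs"
  have "2 * (\<Sum>k<length es. \<bar>inner (fs ! k) (A (es ! k))\<bar>)
      \<le> (\<Sum>k<length fs. inner (fs ! k) (A (fs ! k))) + (\<Sum>k<length es. inner (es ! k) (A (es ! k)))"
    unfolding sum_distrib_left len sum.distrib[symmetric] by (intro sum_mono psd_op_abs_inner_le[OF A])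
  also have "\<dots> \<le> t + t"
    using tr[OF orthonormal_list_imp_set(2)[OF fs]] tr[OF orthonormal_list_imp_set(2)[OF es]]
      sum_nth_distinct[OF orthonormal_list_imp_set(1)[OF fs], of "\<lambda>e. inner e (A e)"]
      sum_nth_distinct[OF orthonormal_list_imp_set(1)[OF es], of "\<lambda>e. inner e (A e)"]
    by simp
  finally show "ereal (\<Sum>k<length (fst (es, fs)). \<bar>inner (snd (es, fs) ! k) (A (fst (es, fs) ! k))\<bar>)
      \<le> ereal t"
    by simp
qed

lemma inner_le_nuclear_norm:
  assumes lin: "linear A" and N: "nuclear_norm A \<le> ereal N"
  shows "inner u (A u) \<le> (norm u)\<^sup>2 * N"
proof (cases "u = 0")
  case True
  then show ?thesis using linear_0[OF lin] by simp
next
  case False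
  define e where "e = (1 / norm u) *\<^sub>R u"
  have "norm e = 1"
    using False by (simp add: e_def)
  then have "\<bar>inner e (A e)\<bar> \<le> N"
    using abs_inner_le_nuclear_norm[of e e A] N by (meson ereal_less_eq(3) order_trans)
  moreover have "inner u (A u) = (norm u)\<^sup>2 * inner e (A e)"
    using False by (simp add: e_def linear_scale[OF lin] power2_eq_square)
  ultimately show ?thesis
    by (simp add: mult_left_mono)
qed

lemma quad_form_expand: "v \<bullet> (B *v v) = (\<Sum>i\<in>UNIV. \<Sum>j\<in>UNIV. B $ i $ j * v $ i * v $ j)"
  by (simp add: inner_vec_def matrix_vector_mult_def sum_distrib_left mult.commute mult.left_commute)

lemma psd_mat_sym:
  assumes "psd_mat B"
  shows "B $ i $ j = B $ j $ i"
proof -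
  have "transpose B $ j $ i = B $ j $ i"
    using assms by (simp add: psd_mat_def)
  then show ?thesis
    by (simp add: transpose_def)
qed

lemma psd_mat_quad_nonneg:
  assumes "psd_mat B"
  shows "0 \<le> (\<Sum>i\<in>UNIV. \<Sum>j\<in>UNIV. B $ i $ j * a i * a j)"
proof -
  have "0 \<le> (\<chi> i. a i) \<bullet> (B *v (\<chi> i. a i))"
    using assms unfolding psd_mat_def by blast
  then show ?thesis
    by (simp add: quad_form_expand)
qed

lemma psd_mat_gram_nonneg:
  fixes r :: "'n::finite \<Rightarrow> 'a::real_inner"
  assumes B: "psd_mat B"
  shows "0 \<le> (\<Sum>i\<in>UNIV. \<Sum>j\<in>UNIV. B $ i $ j * inner (r i) (r j))"
proof -
  obtain E where E: "orthonormal_set E" "span E = span (range r)"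
    using orthonormal_set_exists[of "range r"] by auto
  have "inner (r i) (r j) = (\<Sum>e\<in>E. inner e (r i) * inner e (r j))" for i j
    using E by (intro parseval_orthonormal_set) (auto intro: span_base)
  then have "(\<Sum>i\<in>UNIV. \<Sum>j\<in>UNIV. B $ i $ j * inner (r i) (r j))
      = (\<Sum>i\<in>UNIV. \<Sum>j\<in>UNIV. \<Sum>e\<in>E. B $ i $ j * inner e (r i) * inner e (r j))"
    by (simp add: sum_distrib_left mult.assoc)
  also have "\<dots> = (\<Sum>e\<in>E. \<Sum>i\<in>UNIV. \<Sum>j\<in>UNIV. B $ i $ j * inner e (r i) * inner e (r j))"
    by (subst sum.swap) (rule sum.cong[OF refl], rule sum.swap)
  also have "\<dots> \<ge> 0"
  proof (rule sum_nonneg)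
    fix e
    show "0 \<le> (\<Sum>i\<in>UNIV. \<Sum>j\<in>UNIV. B $ i $ j * inner e (r i) * inner e (r j))"
      using psd_mat_quad_nonneg[OF B, of "\<lambda>i. inner e (r i)"] by simp
  qed
  finally show ?thesis .
qed

lemma embed_A_apply:
  "embed_A \<phi> x B h = (\<Sum>i\<in>UNIV. \<Sum>j\<in>UNIV. (B $ i $ j * inner (\<phi> (x j)) h) *\<^sub>R \<phi> (x i))"
  by (simp add: embed_A_def tensor_op_def)

lemma inner_embed_A:
  "inner u (embed_A \<phi> x B w)
    = (\<Sum>i\<in>UNIV. \<Sum>j\<in>UNIV. B $ i $ j * inner u (\<phi> (x i)) * inner (\<phi> (x j)) w)"
  by (simp add: embed_A_apply inner_sum_right mult.commute mult.left_commute)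

lemma psd_op_embed_A:
  assumes B: "psd_mat B"
  shows "psd_op (embed_A \<phi> x B)"
proof -
  have "bounded_linear (embed_A \<phi> x B)"
    unfolding embed_A_apply[abs_def]
    by (intro bounded_linear_sum bounded_linear_scaleR_const bounded_linear_const_mult
        bounded_linear_inner_right)
  moreover have "inner (embed_A \<phi> x B u) w = inner u (embed_A \<phi> x B w)" for u w
  proof -
    have "inner (embed_A \<phi> x B u) w
        = (\<Sum>j\<in>UNIV. \<Sum>i\<in>UNIV. B $ i $ j * inner w (\<phi> (x i)) * inner (\<phi> (x j)) u)"
      by (subst inner_commute) (simp only: inner_embed_A, rule sum.swap)
    also have "\<dots> = inner u (embed_A \<phi> x B w)"
      unfolding inner_embed_A
      by (intro sum.cong refl) (simp add: psd_mat_sym[OF B, of _ i for i] inner_commute)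
    finally show ?thesis .
  qed
  moreover have "0 \<le> inner u (embed_A \<phi> x B u)" for u
    using psd_mat_quad_nonneg[OF B, of "\<lambda>i. inner u (\<phi> (x i))"]
    by (simp add: inner_embed_A inner_commute)
  ultimately show ?thesis
    unfolding psd_op_def by blast
qed

lemma sum_inner_embed_A:
  "(\<Sum>e\<in>E. inner e (embed_A \<phi> x B e))
    = (\<Sum>i\<in>UNIV. \<Sum>j\<in>UNIV. B $ i $ j * (\<Sum>e\<in>E. inner e (\<phi> (x i)) * inner e (\<phi> (x j))))"
proof -
  have "(\<Sum>e\<in>E. inner e (embed_A \<phi> x B e))
      = (\<Sum>e\<in>E. \<Sum>i\<in>UNIV. \<Sum>j\<in>UNIV. B $ i $ j * (inner e (\<phi> (x i)) * inner e (\<phi> (x j))))"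
    unfolding inner_embed_A by (simp add: inner_commute mult.assoc)
  also have "\<dots> = (\<Sum>i\<in>UNIV. \<Sum>j\<in>UNIV. \<Sum>e\<in>E. B $ i $ j * (inner e (\<phi> (x i)) * inner e (\<phi> (x j))))"
    by (subst sum.swap) (rule sum.cong[OF refl], rule sum.swap)
  finally show ?thesis
    by (simp add: sum_distrib_left)
qed

lemma trace_embed_A_le:
  assumes B: "psd_mat B" and E: "orthonormal_set E"
  shows "(\<Sum>e\<in>E. inner e (embed_A \<phi> x B e))
    \<le> (\<Sum>i\<in>UNIV. \<Sum>j\<in>UNIV. B $ i $ j * inner (\<phi> (x i)) (\<phi> (x j)))"
proof -
  define r where "r i = \<phi> (x i) - orth_proj E (\<phi> (x i))" for i
  have "(\<Sum>i\<in>UNIV. \<Sum>j\<in>UNIV. B $ i $ j * inner (\<phi> (x i)) (\<phi> (x j)))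
      - (\<Sum>e\<in>E. inner e (embed_A \<phi> x B e))
      = (\<Sum>i\<in>UNIV. \<Sum>j\<in>UNIV. B $ i $ j * inner (r i) (r j))"
    by (simp add: r_def sum_inner_embed_A inner_diff_orth_proj[OF E] right_diff_distrib
        sum_subtractf)
  with psd_mat_gram_nonneg[OF B, of r] show ?thesis
    by linarith
qed

lemma trace_embed_A_eq:
  assumes E: "orthonormal_set E" and span: "\<phi> ` range x \<subseteq> span E"
  shows "(\<Sum>e\<in>E. inner e (embed_A \<phi> x B e))
    = (\<Sum>i\<in>UNIV. \<Sum>j\<in>UNIV. B $ i $ j * inner (\<phi> (x i)) (\<phi> (x j)))"
proof -
  have "\<phi> (x i) \<in> span E" for i
    using span by auto
  then have "(\<Sum>e\<in>E. inner e (\<phi> (x i)) * inner e (\<phi> (x j))) = inner (\<phi> (x i)) (\<phi> (x j))" for i j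
    using parseval_orthonormal_set[OF E] by presburger
  then show ?thesis
    by (simp add: sum_inner_embed_A)
qed

lemma nuclear_norm_embed_A:
  fixes \<phi> :: "'x \<Rightarrow> 'h::real_inner" and x :: "'n::finite \<Rightarrow> 'x"
  assumes B: "psd_mat B"
  shows "nuclear_norm (embed_A \<phi> x B)
    = ereal (\<Sum>i\<in>UNIV. \<Sum>j\<in>UNIV. B $ i $ j * inner (\<phi> (x i)) (\<phi> (x j)))"
proof (rule antisym)
  show "nuclear_norm (embed_A \<phi> x B)
      \<le> ereal (\<Sum>i\<in>UNIV. \<Sum>j\<in>UNIV. B $ i $ j * inner (\<phi> (x i)) (\<phi> (x j)))"
    by (intro nuclear_norm_psd_op_le psd_op_embed_A trace_embed_A_le B)
  obtain E where E: "orthonormal_set E" "span E = span (\<phi> ` range x)"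
    using orthonormal_set_exists[of "\<phi> ` range x"] by auto
  then have "\<phi> ` range x \<subseteq> span E"
    by (simp add: span_superset)
  from trace_embed_A_eq[OF E(1) this] sum_inner_le_nuclear_norm[OF E(1)]
  show "ereal (\<Sum>i\<in>UNIV. \<Sum>j\<in>UNIV. B $ i $ j * inner (\<phi> (x i)) (\<phi> (x j)))
      \<le> nuclear_norm (embed_A \<phi> x B)"
    by metis
qed

abbreviation (input) feature_kernel :: "('x \<Rightarrow> 'h::real_inner) \<Rightarrow> 'x \<Rightarrow> 'x \<Rightarrow> real" where
  "feature_kernel \<phi> \<equiv> \<lambda>a b. inner (\<phi> a) (\<phi> b)"

lemma trace_kmat_feature_kernel:
  "trace (kmat (feature_kernel \<phi>) x ** B)
    = (\<Sum>i\<in>UNIV. \<Sum>j\<in>UNIV. B $ i $ j * inner (\<phi> (x i)) (\<phi> (x j)))"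
proof -
  have "trace (kmat (feature_kernel \<phi>) x ** B)
      = (\<Sum>j\<in>UNIV. \<Sum>i\<in>UNIV. inner (\<phi> (x j)) (\<phi> (x i)) * B $ i $ j)"
    by (simp add: trace_def matrix_matrix_mult_def kmat_def)
  also have "\<dots> = (\<Sum>i\<in>UNIV. \<Sum>j\<in>UNIV. B $ i $ j * inner (\<phi> (x i)) (\<phi> (x j)))"
    by (subst sum.swap) (simp add: inner_commute mult.commute)
  finally show ?thesis .
qed

lemma quad_kmat_feature_kernel:
  "\<alpha> \<bullet> (kmat (feature_kernel \<phi>) x *v \<alpha>) = (norm (embed_beta \<phi> x \<alpha>))\<^sup>2"
proof -
  have "(norm (embed_beta \<phi> x \<alpha>))\<^sup>2
      = (\<Sum>j\<in>UNIV. \<Sum>i\<in>UNIV. \<alpha> $ i * \<alpha> $ j * inner (\<phi> (x i)) (\<phi> (x j)))"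
    by (simp add: embed_beta_def power2_norm_eq_inner inner_sum_left inner_sum_right
        sum_distrib_left mult_ac)
  then show ?thesis
    by (subst (asm) sum.swap) (simp add: quad_form_expand kmat_def mult_ac)
qed

lemma column_kmat_inner:
  "column i (kmat (feature_kernel \<phi>) x) \<bullet> \<alpha> = inner (\<phi> (x i)) (embed_beta \<phi> x \<alpha>)"
  by (simp add: column_def kmat_def inner_vec_def embed_beta_def inner_sum_right inner_commute
      mult.commute)

lemma column_kmat_quad:
  "column i (kmat (feature_kernel \<phi>) x) \<bullet> (B *v column i (kmat (feature_kernel \<phi>) x))
    = inner (\<phi> (x i)) (embed_A \<phi> x B (\<phi> (x i)))"
  by (simp add: quad_form_expand inner_embed_A column_def kmat_def inner_commute mult_ac)

lemma linear_embed_beta: "linear (embed_beta \<phi> x)"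
  by (rule linearI) (simp_all add: embed_beta_def scaleR_add_left sum.distrib scaleR_sum_right)

lemma span_features_eq_range: "span (\<phi> ` range x) = range (embed_beta \<phi> x)"
proof
  have "embed_beta \<phi> x (axis k 1) = (\<Sum>i\<in>UNIV. if i = k then \<phi> (x i) else 0)" for k
    unfolding embed_beta_def by (intro sum.cong) (auto simp: axis_def)
  then have "\<phi> (x k) = embed_beta \<phi> x (axis k 1)" for k
    by simp
  then have "\<phi> ` range x \<subseteq> range (embed_beta \<phi> x)"
    by blast
  then show "span (\<phi> ` range x) \<subseteq> range (embed_beta \<phi> x)"
    by (intro span_minimal linear_subspace_image[OF linear_embed_beta] subspace_UNIV)
  show "range (embed_beta \<phi> x) \<subseteq> span (\<phi> ` range x)"
    by (auto simp: embed_beta_def intro!: span_sum span_mul intro: span_base)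
qed

section \<open>Compression onto the span of the features\<close>

definition feature_onb ::
  "('x \<Rightarrow> 'h::real_inner) \<Rightarrow> ('n::finite \<Rightarrow> 'x) \<Rightarrow> 'h set \<Rightarrow> ('h \<Rightarrow> real^'n) \<Rightarrow> bool" where
  "feature_onb \<phi> x E c \<longleftrightarrow> orthonormal_set E \<and> span E = span (\<phi> ` range x)
      \<and> (\<forall>e\<in>E. embed_beta \<phi> x (c e) = e)"

lemma feature_onb_exists:
  fixes \<phi> :: "'x \<Rightarrow> 'h::real_inner" and x :: "'n::finite \<Rightarrow> 'x"
  obtains E c where "feature_onb \<phi> x E c"
proof -
  obtain E where E: "orthonormal_set E" "span E = span (\<phi> ` range x)"
    using orthonormal_set_exists[of "\<phi> ` range x"] by auto
  define c where "c e = (SOME \<alpha>. embed_beta \<phi> x \<alpha> = e)" for e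
  have "e \<in> range (embed_beta \<phi> x)" if "e \<in> E" for e
    using E(2) span_features_eq_range[of \<phi> x] span_base[OF that] by simp
  then have "\<forall>e\<in>E. embed_beta \<phi> x (c e) = e"
    unfolding c_def by (metis (mono_tags) image_iff someI_ex)
  with E that show ?thesis
    by (simp add: feature_onb_def)
qed

lemma feature_in_span:
  "feature_onb \<phi> x E c \<Longrightarrow> \<phi> (x i) \<in> span E"
  by (simp add: feature_onb_def span_base)

lemma inner_feature_onb_coords:
  assumes "feature_onb \<phi> x E c" "e \<in> E"
  shows "(\<Sum>i\<in>UNIV. c e $ i * inner u (\<phi> (x i))) = inner u e"
proof -
  have "inner u e = inner u (embed_beta \<phi> x (c e))"
    using assms by (simp add: feature_onb_def)
  then show ?thesis
    by (simp add: embed_beta_def inner_sum_right)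
qed

definition proj_coords :: "'h::real_inner set \<Rightarrow> ('h \<Rightarrow> real^'n) \<Rightarrow> 'h \<Rightarrow> real^'n" where
  "proj_coords E c \<beta> = (\<Sum>e\<in>E. inner e \<beta> *\<^sub>R c e)"

definition proj_matrix ::
  "'h::real_inner set \<Rightarrow> ('h \<Rightarrow> real^'n) \<Rightarrow> ('h \<Rightarrow> 'h) \<Rightarrow> real^'n^'n" where
  "proj_matrix E c A = (\<chi> i j. \<Sum>e\<in>E. \<Sum>e'\<in>E. c e $ i * inner e (A e') * c e' $ j)"

lemma embed_beta_proj_coords:
  assumes "feature_onb \<phi> x E c"
  shows "embed_beta \<phi> x (proj_coords E c \<beta>) = orth_proj E \<beta>"
  using assms
  by (simp add: proj_coords_def orth_proj_def feature_onb_def linear_sum[OF linear_embed_beta]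
      linear_scale[OF linear_embed_beta])

lemma sum_bilinear_regroup:
  fixes a b :: "'e \<Rightarrow> 'i \<Rightarrow> real"
  shows "(\<Sum>i\<in>I. \<Sum>j\<in>I. (\<Sum>e\<in>E. \<Sum>e'\<in>E. a e i * m e e' * b e' j) * p i * q j)
    = (\<Sum>e\<in>E. \<Sum>e'\<in>E. m e e' * (\<Sum>i\<in>I. a e i * p i) * (\<Sum>j\<in>I. b e' j * q j))"
proof -
  have "(\<Sum>i\<in>I. \<Sum>j\<in>I. (\<Sum>e\<in>E. \<Sum>e'\<in>E. a e i * m e e' * b e' j) * p i * q j)
      = (\<Sum>i\<in>I. \<Sum>j\<in>I. \<Sum>e\<in>E. \<Sum>e'\<in>E. m e e' * (a e i * p i) * (b e' j * q j))"
    by (simp add: sum_distrib_left sum_distrib_right mult_ac)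
  also have "\<dots> = (\<Sum>i\<in>I. \<Sum>e\<in>E. \<Sum>j\<in>I. \<Sum>e'\<in>E. m e e' * (a e i * p i) * (b e' j * q j))"
    by (rule sum.cong[OF refl], rule sum.swap)
  also have "\<dots> = (\<Sum>e\<in>E. \<Sum>i\<in>I. \<Sum>e'\<in>E. \<Sum>j\<in>I. m e e' * (a e i * p i) * (b e' j * q j))"
    by (subst sum.swap) (rule sum.cong[OF refl], rule sum.cong[OF refl], rule sum.swap)
  also have "\<dots> = (\<Sum>e\<in>E. \<Sum>e'\<in>E. \<Sum>i\<in>I. \<Sum>j\<in>I. m e e' * (a e i * p i) * (b e' j * q j))"
    by (rule sum.cong[OF refl], rule sum.swap)
  also have "\<dots> = (\<Sum>e\<in>E. \<Sum>e'\<in>E. m e e' * (\<Sum>i\<in>I. a e i * p i) * (\<Sum>j\<in>I. b e' j * q j))"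
  proof (intro sum.cong refl)
    fix e e'
    have "m e e' * (\<Sum>i\<in>I. a e i * p i) * (\<Sum>j\<in>I. b e' j * q j)
        = m e e' * (\<Sum>i\<in>I. \<Sum>j\<in>I. (a e i * p i) * (b e' j * q j))"
      by (simp only: mult.assoc sum_product)
    then show "(\<Sum>i\<in>I. \<Sum>j\<in>I. m e e' * (a e i * p i) * (b e' j * q j))
        = m e e' * (\<Sum>i\<in>I. a e i * p i) * (\<Sum>j\<in>I. b e' j * q j)"
      by (simp add: sum_distrib_left mult.assoc)
  qed
  finally show ?thesis .
qed

lemma inner_embed_A_proj_matrix:
  assumes E: "feature_onb \<phi> x E c" and lin: "linear A"
  shows "inner u (embed_A \<phi> x (proj_matrix E c A) w) = inner (orth_proj E u) (A (orth_proj E w))"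
proof -
  have "inner u (embed_A \<phi> x (proj_matrix E c A) w)
      = (\<Sum>e\<in>E. \<Sum>e'\<in>E. inner e (A e') * (\<Sum>i\<in>UNIV. c e $ i * inner u (\<phi> (x i)))
          * (\<Sum>j\<in>UNIV. c e' $ j * inner w (\<phi> (x j))))"
    unfolding inner_embed_A proj_matrix_def
    by (simp add: sum_bilinear_regroup[symmetric] inner_commute[of _ w])
  also have "\<dots> = (\<Sum>e\<in>E. \<Sum>e'\<in>E. inner e u * inner e' w * inner e (A e'))"
    using E by (intro sum.cong refl) (simp add: inner_feature_onb_coords inner_commute)
  also have "\<dots> = (\<Sum>e'\<in>E. \<Sum>e\<in>E. inner e u * inner e' w * inner e (A e'))"
    by (rule sum.swap)
  also have "\<dots> = inner (orth_proj E u) (A (orth_proj E w))"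
    by (simp add: orth_proj_def[of E w] linear_sum[OF lin] linear_scale[OF lin] inner_sum_right
        inner_orth_proj_left sum_distrib_left mult_ac)
  finally show ?thesis .
qed

lemma psd_mat_proj_matrix:
  fixes c :: "'h::real_inner \<Rightarrow> real^'n::finite"
  assumes A: "psd_op A"
  shows "psd_mat (proj_matrix E c A)"
  unfolding psd_mat_def
proof (intro conjI allI)
  have lin: "linear A"
    using A by (simp add: psd_op_def bounded_linear.linear)
  have sym: "inner e (A e') = inner e' (A e)" for e e'
    using A by (metis psd_op_def inner_commute)
  have "proj_matrix E c A $ j $ i = proj_matrix E c A $ i $ j" for i j
  proof -
    have "proj_matrix E c A $ j $ i = (\<Sum>e'\<in>E. \<Sum>e\<in>E. c e $ j * inner e (A e') * c e' $ i)"
      unfolding proj_matrix_def by (simp, rule sum.swap)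
    also have "\<dots> = proj_matrix E c A $ i $ j"
      unfolding proj_matrix_def by (simp, intro sum.cong refl, simp add: sym mult_ac)
    finally show ?thesis .
  qed
  then show "transpose (proj_matrix E c A) = proj_matrix E c A"
    by (simp add: transpose_def vec_eq_iff)
  fix w :: "real^'n"
  define s where "s e = (\<Sum>i\<in>UNIV. c e $ i * w $ i)" for e
  have "w \<bullet> (proj_matrix E c A *v w) = (\<Sum>e\<in>E. \<Sum>e'\<in>E. inner e (A e') * s e * s e')"
    by (simp add: quad_form_expand proj_matrix_def sum_bilinear_regroup s_def)
  also have "\<dots> = (\<Sum>e'\<in>E. \<Sum>e\<in>E. inner e (A e') * s e * s e')"
    by (rule sum.swap)
  also have "\<dots> = inner (\<Sum>e\<in>E. s e *\<^sub>R e) (A (\<Sum>e\<in>E. s e *\<^sub>R e))"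
    by (simp add: linear_sum[OF lin] linear_scale[OF lin] inner_sum_left inner_sum_right
        sum_distrib_left mult_ac)
  also have "\<dots> \<ge> 0"
    using A by (simp add: psd_op_def)
  finally show "0 \<le> w \<bullet> (proj_matrix E c A *v w)" .
qed

lemma inner_feature_proj_matrix:
  assumes "feature_onb \<phi> x E c" "linear A"
  shows "inner (\<phi> (x i)) (embed_A \<phi> x (proj_matrix E c A) (\<phi> (x i)))
    = inner (\<phi> (x i)) (A (\<phi> (x i)))"
  using assms feature_in_span[OF assms(1)]
  by (simp add: inner_embed_A_proj_matrix orth_proj_eq_self feature_onb_def)

lemma trace_proj_matrix:
  assumes E: "feature_onb \<phi> x E c" and lin: "linear A"
  shows "(\<Sum>i\<in>UNIV. \<Sum>j\<in>UNIV. proj_matrix E c A $ i $ j * inner (\<phi> (x i)) (\<phi> (x j)))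
    = (\<Sum>e\<in>E. inner e (A e))"
proof -
  have onb: "orthonormal_set E" and "\<phi> ` range x \<subseteq> span E"
    using feature_in_span[OF E] E by (auto simp: feature_onb_def)
  then have "(\<Sum>i\<in>UNIV. \<Sum>j\<in>UNIV. proj_matrix E c A $ i $ j * inner (\<phi> (x i)) (\<phi> (x j)))
      = (\<Sum>e\<in>E. inner e (embed_A \<phi> x (proj_matrix E c A) e))"
    by (simp add: trace_embed_A_eq)
  also have "\<dots> = (\<Sum>e\<in>E. inner e (A e))"
    using onb by (intro sum.cong refl) (simp add: inner_embed_A_proj_matrix[OF E lin] orth_proj_eq_self span_base)
  finally show ?thesis .
qed

lemma abs_proj_matrix_le:
  assumes E: "orthonormal_set E" and N: "nuclear_norm A \<le> ereal N"
  shows "\<bar>proj_matrix E c A $ i $ j\<bar> \<le> (\<Sum>e\<in>E. \<Sum>e'\<in>E. \<bar>c e $ i\<bar> * N * \<bar>c e' $ j\<bar>)"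
proof -
  have "\<bar>inner e (A e')\<bar> \<le> N" if "e \<in> E" "e' \<in> E" for e e'
    using E that abs_inner_le_nuclear_norm[of e' e A] N
    by (meson ereal_less_eq(3) order_trans orthonormal_set_def)
  then have "(\<Sum>e\<in>E. \<Sum>e'\<in>E. \<bar>c e $ i * inner e (A e') * c e' $ j\<bar>)
      \<le> (\<Sum>e\<in>E. \<Sum>e'\<in>E. \<bar>c e $ i\<bar> * N * \<bar>c e' $ j\<bar>)"
    unfolding abs_mult by (intro sum_mono mult_right_mono mult_left_mono) auto
  moreover have "\<bar>proj_matrix E c A $ i $ j\<bar> \<le> (\<Sum>e\<in>E. \<Sum>e'\<in>E. \<bar>c e $ i * inner e (A e') * c e' $ j\<bar>)"
    unfolding proj_matrix_def by (simp, rule order_trans[OF sum_abs], intro sum_mono sum_abs)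
  ultimately show ?thesis
    by linarith
qed

lemma abs_proj_coords_le:
  assumes E: "feature_onb \<phi> x E c"
  shows "\<bar>proj_coords E c \<beta> $ i\<bar>
    \<le> (\<Sum>e\<in>E. \<bar>c e $ i\<bar> * (\<Sum>k\<in>UNIV. \<bar>c e $ k\<bar> * \<bar>inner (\<phi> (x k)) \<beta>\<bar>))"
proof -
  have "\<bar>inner e \<beta>\<bar> \<le> (\<Sum>k\<in>UNIV. \<bar>c e $ k\<bar> * \<bar>inner (\<phi> (x k)) \<beta>\<bar>)" if "e \<in> E" for e
    using inner_feature_onb_coords[OF E that, of \<beta>] sum_abs[of "\<lambda>k. c e $ k * inner \<beta> (\<phi> (x k))" UNIV]
    by (simp add: inner_commute abs_mult)
  then have "(\<Sum>e\<in>E. \<bar>c e $ i\<bar> * \<bar>inner e \<beta>\<bar>)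
      \<le> (\<Sum>e\<in>E. \<bar>c e $ i\<bar> * (\<Sum>k\<in>UNIV. \<bar>c e $ k\<bar> * \<bar>inner (\<phi> (x k)) \<beta>\<bar>))"
    by (intro sum_mono mult_left_mono) auto
  moreover have "\<bar>proj_coords E c \<beta> $ i\<bar> \<le> (\<Sum>e\<in>E. \<bar>c e $ i\<bar> * \<bar>inner e \<beta>\<bar>)"
    unfolding proj_coords_def using sum_abs[of "\<lambda>e. inner e \<beta> * c e $ i" E]
    by (simp add: abs_mult mult.commute)
  ultimately show ?thesis
    by linarith
qed

section \<open>Compactness\<close>

lemma INF_attained_compact_reduction:
  fixes f :: "'a::topological_space \<Rightarrow> real"
  assumes S: "compact S" "S \<subseteq> P" and cont: "continuous_on S f"
    and v: "(INF p\<in>P. ereal (f p)) = ereal v" and "v < t"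
    and reduce: "\<And>p. p \<in> P \<Longrightarrow> f p < t \<Longrightarrow> \<exists>q\<in>S. f q \<le> f p"
  obtains p where "p \<in> P" "f p = v"
proof -
  have below: "\<exists>p\<in>P. f p < u" if "v < u" for u
  proof -
    have "(INF p\<in>P. ereal (f p)) < ereal u"
      using that v by simp
    then show ?thesis
      by (simp add: INF_less_iff)
  qed
  then obtain p0 where "p0 \<in> P" "f p0 < t"
    using \<open>v < t\<close> by blast
  then have "S \<noteq> {}"
    using reduce by blast
  then obtain q0 where q0: "q0 \<in> S" and min: "\<And>q. q \<in> S \<Longrightarrow> f q0 \<le> f q"
    using continuous_attains_inf[OF S(1) _ cont] by blast
  have "ereal v \<le> ereal (f q0)"
    using q0 S(2) v by (metis INF_lower subsetD)
  moreover have "f q0 \<le> v"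
  proof (rule ccontr)
    assume "\<not> f q0 \<le> v"
    then obtain p where "p \<in> P" "f p < f q0" "f p < t"
      using below[of "min (f q0) t"] \<open>v < t\<close> by auto
    then show False
      using reduce min by fastforce
  qed
  ultimately show ?thesis
    using that q0 S(2) by auto
qed

lemma bounded_pairs_entrywise:
  "bounded {p :: (real^'n::finite) \<times> (real^'m::finite^'k::finite).
      (\<forall>i. \<bar>fst p $ i\<bar> \<le> a i) \<and> (\<forall>i j. \<bar>snd p $ i $ j\<bar> \<le> b i j)}"
  unfolding bounded_iff
proof (intro exI ballI)
  fix p :: "(real^'n) \<times> (real^'m^'k)"
  assume p: "p \<in> {p. (\<forall>i. \<bar>fst p $ i\<bar> \<le> a i) \<and> (\<forall>i j. \<bar>snd p $ i $ j\<bar> \<le> b i j)}"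
  have "norm p \<le> norm (fst p) + norm (snd p)"
    using norm_Pair_le[of "fst p" "snd p"] by simp
  also have "\<dots> \<le> (\<Sum>i\<in>UNIV. \<bar>fst p $ i\<bar>) + (\<Sum>i\<in>UNIV. \<Sum>j\<in>UNIV. \<bar>snd p $ i $ j\<bar>)"
    using L2_set_le_sum[of UNIV "\<lambda>i. norm (snd p $ i)"] norm_le_l1_cart
    by (intro add_mono order_trans[OF _ sum_mono[OF norm_le_l1_cart]]) (auto simp: norm_vec_def)
  also have "\<dots> \<le> (\<Sum>i\<in>UNIV. a i) + (\<Sum>i\<in>UNIV. \<Sum>j\<in>UNIV. b i j)"
    using p by (intro add_mono sum_mono) auto
  finally show "norm p \<le> (\<Sum>i\<in>UNIV. a i) + (\<Sum>i\<in>UNIV. \<Sum>j\<in>UNIV. b i j)" .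
qed

lemma compact_Pn_feasible_entrywise:
  "compact ({p :: (real^'n::finite) \<times> (real^'n^'n). Pn_feasible Km Kv x y (fst p) (snd p)}
      \<inter> {p. (\<forall>i. \<bar>fst p $ i\<bar> \<le> a i) \<and> (\<forall>i j. \<bar>snd p $ i $ j\<bar> \<le> b i j)})"
proof -
  have "closed {p :: (real^'n) \<times> (real^'n^'n). Pn_feasible Km Kv x y (fst p) (snd p)}"
    unfolding Pn_feasible_def psd_mat_def transpose_def matrix_vector_mult_def
    by (intro closed_Collect_conj closed_Collect_all closed_Collect_le closed_Collect_eq
        continuous_intros)
  moreover have "closed {p :: (real^'n) \<times> (real^'n^'n).
      (\<forall>i. \<bar>fst p $ i\<bar> \<le> a i) \<and> (\<forall>i j. \<bar>snd p $ i $ j\<bar> \<le> b i j)}"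
    by (intro closed_Collect_conj closed_Collect_all closed_Collect_le continuous_intros)
  moreover have "bounded ({p :: (real^'n) \<times> (real^'n^'n). Pn_feasible Km Kv x y (fst p) (snd p)}
      \<inter> {p. (\<forall>i. \<bar>fst p $ i\<bar> \<le> a i) \<and> (\<forall>i j. \<bar>snd p $ i $ j\<bar> \<le> b i j)})"
    by (intro bounded_Int disjI2 bounded_pairs_entrywise)
  ultimately show ?thesis
    by (simp add: compact_eq_bounded_closed closed_Int)
qed

lemma continuous_on_Pn_obj:
  "continuous_on S (\<lambda>p :: (real^'n::finite) \<times> (real^'n^'n). Pn_obj \<gamma> Km Kv x (fst p) (snd p))"
  unfolding Pn_obj_def trace_def matrix_vector_mult_def matrix_matrix_mult_def
  by (intro continuous_intros)

lemma Pn_obj_nonneg: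
  assumes "psd_mat B" "\<gamma> \<ge> 0"
  shows "0 \<le> Pn_obj \<gamma> (feature_kernel \<phi>m) (feature_kernel \<phi>v) x \<alpha> B"
  using psd_mat_gram_nonneg[OF assms(1), of "\<lambda>i. \<phi>v (x i)"] assms(2)
  by (simp add: Pn_obj_def quad_kmat_feature_kernel trace_kmat_feature_kernel)

lemma Pn_feasible_embed:
  fixes \<phi>m :: "'x \<Rightarrow> 'hm::real_inner" and \<phi>v :: "'x \<Rightarrow> 'hv::real_inner"
    and x :: "'n::finite \<Rightarrow> 'x"
  assumes F: "Pn_feasible (feature_kernel \<phi>m) (feature_kernel \<phi>v) x y \<alpha> B"
  shows "Pinf_feasible \<phi>m \<phi>v x y (embed_beta \<phi>m x \<alpha>) (embed_A \<phi>v x B)"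
    and "Pinf_obj \<gamma> (embed_beta \<phi>m x \<alpha>) (embed_A \<phi>v x B)
      = ereal (Pn_obj \<gamma> (feature_kernel \<phi>m) (feature_kernel \<phi>v) x \<alpha> B)"
proof -
  have B: "psd_mat B"
    using F by (simp add: Pn_feasible_def)
  show "Pinf_feasible \<phi>m \<phi>v x y (embed_beta \<phi>m x \<alpha>) (embed_A \<phi>v x B)"
    using F psd_op_embed_A[OF B]
    unfolding Pn_feasible_def Pinf_feasible_def column_kmat_quad unfolding column_kmat_inner by simp
  show "Pinf_obj \<gamma> (embed_beta \<phi>m x \<alpha>) (embed_A \<phi>v x B)
      = ereal (Pn_obj \<gamma> (feature_kernel \<phi>m) (feature_kernel \<phi>v) x \<alpha> B)"
    by (simp add: Pinf_obj_def Pn_obj_def nuclear_norm_embed_A[OF B] quad_kmat_feature_kernel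
        trace_kmat_feature_kernel)
qed

lemma nuclear_norm_le_Pinf_obj: "\<gamma> \<ge> 0 \<Longrightarrow> nuclear_norm A \<le> Pinf_obj \<gamma> \<beta> A"
  unfolding Pinf_obj_def by (rule ereal_le_add_self2) simp

lemma Pinf_feasible_compress:
  fixes \<phi>m :: "'x \<Rightarrow> 'hm::real_inner" and \<phi>v :: "'x \<Rightarrow> 'hv::real_inner"
    and x :: "'n::finite \<Rightarrow> 'x"
  assumes H: "feature_onb \<phi>m x H d" and E: "feature_onb \<phi>v x E c"
    and P: "Pinf_feasible \<phi>m \<phi>v x y \<beta> A" and \<gamma>: "\<gamma> \<ge> 0"
  shows "Pn_feasible (feature_kernel \<phi>m) (feature_kernel \<phi>v) x y
      (proj_coords H d \<beta>) (proj_matrix E c A)"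
    and "ereal (Pn_obj \<gamma> (feature_kernel \<phi>m) (feature_kernel \<phi>v) x
      (proj_coords H d \<beta>) (proj_matrix E c A)) \<le> Pinf_obj \<gamma> \<beta> A"
proof -
  have A: "psd_op A" and lin: "linear A"
    using P by (simp_all add: Pinf_feasible_def psd_op_def bounded_linear.linear)
  have H': "orthonormal_set H"
    using H by (simp add: feature_onb_def)
  have "inner (\<phi>m (x i)) (orth_proj H \<beta>) = inner (\<phi>m (x i)) \<beta>" for i
    by (rule inner_orth_proj_span[OF H' feature_in_span[OF H]])
  then show "Pn_feasible (feature_kernel \<phi>m) (feature_kernel \<phi>v) x y
      (proj_coords H d \<beta>) (proj_matrix E c A)"
    using P psd_mat_proj_matrix[OF A]
    unfolding Pn_feasible_def Pinf_feasible_def column_kmat_quad unfolding column_kmat_inner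
    by (simp add: embed_beta_proj_coords[OF H] inner_feature_proj_matrix[OF E lin])
  have "\<gamma> * (norm (orth_proj H \<beta>))\<^sup>2 \<le> \<gamma> * (norm \<beta>)\<^sup>2"
    using \<gamma> norm_orth_proj_le[OF H'] by (simp add: mult_left_mono power_mono)
  moreover have "ereal (\<Sum>e\<in>E. inner e (A e)) \<le> nuclear_norm A"
    using E by (simp add: sum_inner_le_nuclear_norm feature_onb_def)
  ultimately show "ereal (Pn_obj \<gamma> (feature_kernel \<phi>m) (feature_kernel \<phi>v) x
      (proj_coords H d \<beta>) (proj_matrix E c A)) \<le> Pinf_obj \<gamma> \<beta> A"
    unfolding Pn_obj_def Pinf_obj_def quad_kmat_feature_kernel trace_kmat_feature_kernel
      embed_beta_proj_coords[OF H] trace_proj_matrix[OF E lin]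
    by (metis add_mono ereal_less_eq(3) plus_ereal.simps(1))
qed

lemma Pn_val_eq_Pinf_val:
  fixes \<phi>m :: "'x \<Rightarrow> 'hm::real_inner" and \<phi>v :: "'x \<Rightarrow> 'hv::real_inner"
    and x :: "'n::finite \<Rightarrow> 'x"
  assumes \<gamma>: "\<gamma> \<ge> 0"
  shows "Pn_val \<gamma> (feature_kernel \<phi>m) (feature_kernel \<phi>v) x y = Pinf_val \<gamma> \<phi>m \<phi>v x y"
proof (rule antisym)
  obtain H d where H: "feature_onb \<phi>m x H d"
    using feature_onb_exists by blast
  obtain E c where E: "feature_onb \<phi>v x E c"
    using feature_onb_exists by blast
  show "Pn_val \<gamma> (feature_kernel \<phi>m) (feature_kernel \<phi>v) x y \<le> Pinf_val \<gamma> \<phi>m \<phi>v x y"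
    unfolding Pinf_val_def
  proof (rule INF_greatest, clarify)
    fix \<beta> A
    assume P: "Pinf_feasible \<phi>m \<phi>v x y \<beta> A"
    have "Pn_val \<gamma> (feature_kernel \<phi>m) (feature_kernel \<phi>v) x y
        \<le> ereal (Pn_obj \<gamma> (feature_kernel \<phi>m) (feature_kernel \<phi>v) x
            (proj_coords H d \<beta>) (proj_matrix E c A))"
      unfolding Pn_val_def
      by (rule INF_lower2[of "(proj_coords H d \<beta>, proj_matrix E c A)"])
        (simp_all add: Pinf_feasible_compress(1)[OF H E P \<gamma>])
    also have "\<dots> \<le> Pinf_obj \<gamma> \<beta> A"
      by (rule Pinf_feasible_compress(2)[OF H E P \<gamma>])
    finally show "Pn_val \<gamma> (feature_kernel \<phi>m) (feature_kernel \<phi>v) x y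
        \<le> Pinf_obj \<gamma> (fst (\<beta>, A)) (snd (\<beta>, A))"
      by simp
  qed
  show "Pinf_val \<gamma> \<phi>m \<phi>v x y \<le> Pn_val \<gamma> (feature_kernel \<phi>m) (feature_kernel \<phi>v) x y"
    unfolding Pn_val_def
  proof (rule INF_greatest, clarify)
    fix \<alpha> B
    assume F: "Pn_feasible (feature_kernel \<phi>m) (feature_kernel \<phi>v) x y \<alpha> B"
    show "Pinf_val \<gamma> \<phi>m \<phi>v x y
        \<le> ereal (Pn_obj \<gamma> (feature_kernel \<phi>m) (feature_kernel \<phi>v) x (fst (\<alpha>, B)) (snd (\<alpha>, B)))"
      unfolding Pinf_val_def
      by (rule INF_lower2[of "(embed_beta \<phi>m x \<alpha>, embed_A \<phi>v x B)"])
        (simp_all add: Pn_feasible_embed[OF F])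
  qed
qed

lemma abs_inner_le_of_Pinf_feasible:
  assumes P: "Pinf_feasible \<phi>m \<phi>v x y \<beta> A" and N: "nuclear_norm A \<le> ereal N"
  shows "\<bar>inner (\<phi>m (x k)) \<beta>\<bar> \<le> \<bar>y k\<bar> + 1 + (norm (\<phi>v (x k)))\<^sup>2 * N"
proof -
  define r where "r = y k - inner (\<phi>m (x k)) \<beta>"
  have "\<bar>r\<bar> \<le> 1 + r\<^sup>2"
    using zero_le_power2[of "\<bar>r\<bar> - 1"] by (simp add: power2_eq_square algebra_simps)
  moreover have "r\<^sup>2 \<le> inner (\<phi>v (x k)) (A (\<phi>v (x k)))"
    using P by (simp add: r_def Pinf_feasible_def)
  moreover have "linear A"
    using P by (simp add: Pinf_feasible_def psd_op_def bounded_linear.linear)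
  then have "inner (\<phi>v (x k)) (A (\<phi>v (x k))) \<le> (norm (\<phi>v (x k)))\<^sup>2 * N"
    using N by (rule inner_le_nuclear_norm)
  ultimately show ?thesis
    unfolding r_def by linarith
qed

lemma abs_compress_le:
  assumes H: "feature_onb \<phi>m x H d" and E: "feature_onb \<phi>v x E c"
    and P: "Pinf_feasible \<phi>m \<phi>v x y \<beta> A" and N: "nuclear_norm A \<le> ereal N"
  shows "\<bar>proj_coords H d \<beta> $ i\<bar>
      \<le> (\<Sum>h\<in>H. \<bar>d h $ i\<bar> * (\<Sum>k\<in>UNIV. \<bar>d h $ k\<bar> * (\<bar>y k\<bar> + 1 + (norm (\<phi>v (x k)))\<^sup>2 * N)))"
    and "\<bar>proj_matrix E c A $ i $ j\<bar> \<le> (\<Sum>e\<in>E. \<Sum>e'\<in>E. \<bar>c e $ i\<bar> * N * \<bar>c e' $ j\<bar>)"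
proof -
  show "\<bar>proj_coords H d \<beta> $ i\<bar>
      \<le> (\<Sum>h\<in>H. \<bar>d h $ i\<bar> * (\<Sum>k\<in>UNIV. \<bar>d h $ k\<bar> * (\<bar>y k\<bar> + 1 + (norm (\<phi>v (x k)))\<^sup>2 * N)))"
    by (rule order_trans[OF abs_proj_coords_le[OF H]])
      (intro sum_mono mult_left_mono abs_inner_le_of_Pinf_feasible[OF P N] abs_ge_zero)
  show "\<bar>proj_matrix E c A $ i $ j\<bar> \<le> (\<Sum>e\<in>E. \<Sum>e'\<in>E. \<bar>c e $ i\<bar> * N * \<bar>c e' $ j\<bar>)"
    using E N by (intro abs_proj_matrix_le) (simp_all add: feature_onb_def)
qed

lemma Pn_val_finite:
  fixes \<phi>m :: "'x \<Rightarrow> 'hm::real_inner" and \<phi>v :: "'x \<Rightarrow> 'hv::real_inner"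
    and x :: "'n::finite \<Rightarrow> 'x"
  assumes \<gamma>: "\<gamma> \<ge> 0" and P0: "Pinf_feasible \<phi>m \<phi>v x y \<beta>0 A0"
  obtains v where "Pn_val \<gamma> (feature_kernel \<phi>m) (feature_kernel \<phi>v) x y = ereal v"
proof -
  obtain H d where H: "feature_onb \<phi>m x H d"
    using feature_onb_exists by blast
  obtain E c where E: "feature_onb \<phi>v x E c"
    using feature_onb_exists by blast
  have "Pn_val \<gamma> (feature_kernel \<phi>m) (feature_kernel \<phi>v) x y
      \<le> ereal (Pn_obj \<gamma> (feature_kernel \<phi>m) (feature_kernel \<phi>v) x
          (proj_coords H d \<beta>0) (proj_matrix E c A0))"
    unfolding Pn_val_def
    by (rule INF_lower2[of "(proj_coords H d \<beta>0, proj_matrix E c A0)"])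
      (simp_all add: Pinf_feasible_compress(1)[OF H E P0 \<gamma>])
  moreover have "0 \<le> Pn_val \<gamma> (feature_kernel \<phi>m) (feature_kernel \<phi>v) x y"
    unfolding Pn_val_def using \<gamma>
    by (auto intro!: INF_greatest Pn_obj_nonneg simp: Pn_feasible_def)
  ultimately show ?thesis
    using that by (cases "Pn_val \<gamma> (feature_kernel \<phi>m) (feature_kernel \<phi>v) x y") auto
qed

text \<open>The feasible set of (P_n) need not be bounded, as the kernel matrices may be singular; the
  entrywise bounds a and b hold for the compression R p of any feasible p of objective below N.\<close>

lemma Pn_val_attained:
  fixes \<phi>m :: "'x \<Rightarrow> 'hm::real_inner" and \<phi>v :: "'x \<Rightarrow> 'hv::real_inner"
    and x :: "'n::finite \<Rightarrow> 'x"
  assumes \<gamma>: "\<gamma> \<ge> 0" and P0: "Pinf_feasible \<phi>m \<phi>v x y \<beta>0 A0"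
  obtains \<alpha> B where "Pn_feasible (feature_kernel \<phi>m) (feature_kernel \<phi>v) x y \<alpha> B"
    and "ereal (Pn_obj \<gamma> (feature_kernel \<phi>m) (feature_kernel \<phi>v) x \<alpha> B)
      = Pn_val \<gamma> (feature_kernel \<phi>m) (feature_kernel \<phi>v) x y"
proof -
  obtain H d where H: "feature_onb \<phi>m x H d"
    using feature_onb_exists by blast
  obtain E c where E: "feature_onb \<phi>v x E c"
    using feature_onb_exists by blast
  define P where "P = {p. Pn_feasible (feature_kernel \<phi>m) (feature_kernel \<phi>v) x y (fst p) (snd p)}"
  define f where "f p = Pn_obj \<gamma> (feature_kernel \<phi>m) (feature_kernel \<phi>v) x (fst p) (snd p)" for p
  define R where "R p = (proj_coords H d (embed_beta \<phi>m x (fst p)),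
      proj_matrix E c (embed_A \<phi>v x (snd p)))" for p :: "(real^'n) \<times> (real^'n^'n)"
  have val: "Pn_val \<gamma> (feature_kernel \<phi>m) (feature_kernel \<phi>v) x y = (INF p\<in>P. ereal (f p))"
    unfolding Pn_val_def P_def f_def by (simp add: case_prod_beta')
  have embed: "Pinf_feasible \<phi>m \<phi>v x y (embed_beta \<phi>m x (fst p)) (embed_A \<phi>v x (snd p))"
      "Pinf_obj \<gamma> (embed_beta \<phi>m x (fst p)) (embed_A \<phi>v x (snd p)) = ereal (f p)" if "p \<in> P" for p
    using Pn_feasible_embed that by (auto simp: P_def f_def)
  have R: "R p \<in> P" "f (R p) \<le> f p" if "p \<in> P" for p
    using Pinf_feasible_compress[OF H E embed(1)[OF that] \<gamma>] embed(2)[OF that]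
    by (auto simp: R_def P_def f_def)

  obtain v where v: "(INF p\<in>P. ereal (f p)) = ereal v"
    using Pn_val_finite[OF \<gamma> P0] val by metis

  define N where "N = v + 1"
  define a where "a i = (\<Sum>h\<in>H. \<bar>d h $ i\<bar>
      * (\<Sum>k\<in>UNIV. \<bar>d h $ k\<bar> * (\<bar>y k\<bar> + 1 + (norm (\<phi>v (x k)))\<^sup>2 * N)))" for i
  define b where "b i j = (\<Sum>e\<in>E. \<Sum>e'\<in>E. \<bar>c e $ i\<bar> * N * \<bar>c e' $ j\<bar>)" for i j
  define S where "S = P \<inter> {p. (\<forall>i. \<bar>fst p $ i\<bar> \<le> a i) \<and> (\<forall>i j. \<bar>snd p $ i $ j\<bar> \<le> b i j)}"
  have "compact S"
    unfolding S_def P_def by (rule compact_Pn_feasible_entrywise)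
  moreover have "continuous_on S f"
    unfolding f_def by (rule continuous_on_Pn_obj)
  moreover have "\<exists>q\<in>S. f q \<le> f p" if p: "p \<in> P" "f p < N" for p
  proof -
    have nn: "nuclear_norm (embed_A \<phi>v x (snd p)) \<le> ereal N"
      using nuclear_norm_le_Pinf_obj[OF \<gamma>] embed(2)[OF p(1)] p(2)
      by (metis ereal_less_eq(3) less_imp_le order_trans)
    have "\<bar>fst (R p) $ i\<bar> \<le> a i" "\<bar>snd (R p) $ i $ j\<bar> \<le> b i j" for i j
      unfolding R_def a_def b_def fst_conv snd_conv
      by (rule abs_compress_le[OF H E embed(1)[OF p(1)] nn])+
    then show ?thesis
      using R[OF p(1)] unfolding S_def by blast
  qed
  moreover have "S \<subseteq> P" "v < N"
    by (auto simp: S_def N_def)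
  ultimately obtain p where "p \<in> P" "f p = v"
    using INF_attained_compact_reduction[of S P f v N] v by blast
  with that val v show ?thesis
    by (auto simp: P_def f_def)
qed

theorem mainTheorem3:
  fixes Km Kv :: "'x \<Rightarrow> 'x \<Rightarrow> real"
    and \<phi>m :: "'x \<Rightarrow> 'hm::{real_inner,complete_space}"
    and \<phi>v :: "'x \<Rightarrow> 'hv::{real_inner,complete_space}"
    and x :: "'n::finite \<Rightarrow> 'x"
    and y :: "'n \<Rightarrow> real"
    and \<gamma> :: real
  assumes Km_feat: "\<And>a b. Km a b = inner (\<phi>m a) (\<phi>m b)"
    and Kv_feat: "\<And>a b. Kv a b = inner (\<phi>v a) (\<phi>v b)"
    and Hm_rkhs: "closure (span (range \<phi>m)) = UNIV"
    and Hv_rkhs: "closure (span (range \<phi>v)) = UNIV"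
    and gamma_nonneg: "\<gamma> \<ge> 0"
  shows "Pn_val \<gamma> Km Kv x y = Pinf_val \<gamma> \<phi>m \<phi>v x y
    \<and> (\<forall>\<alpha> B. Pn_feasible Km Kv x y \<alpha> B \<longrightarrow>
          Pinf_feasible \<phi>m \<phi>v x y (embed_beta \<phi>m x \<alpha>) (embed_A \<phi>v x B)
          \<and> Pinf_obj \<gamma> (embed_beta \<phi>m x \<alpha>) (embed_A \<phi>v x B) = ereal (Pn_obj \<gamma> Km Kv x \<alpha> B))
    \<and> (\<forall>\<alpha> B. Pn_feasible Km Kv x y \<alpha> B
             \<and> ereal (Pn_obj \<gamma> Km Kv x \<alpha> B) = Pn_val \<gamma> Km Kv x y \<longrightarrow>
          Pinf_feasible \<phi>m \<phi>v x y (embed_beta \<phi>m x \<alpha>) (embed_A \<phi>v x B)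
          \<and> Pinf_obj \<gamma> (embed_beta \<phi>m x \<alpha>) (embed_A \<phi>v x B) = Pinf_val \<gamma> \<phi>m \<phi>v x y)
    \<and> ((\<exists>\<beta> A. Pinf_feasible \<phi>m \<phi>v x y \<beta> A) \<longrightarrow>
          (\<exists>\<alpha> B. transpose B = B
             \<and> Pinf_feasible \<phi>m \<phi>v x y (embed_beta \<phi>m x \<alpha>) (embed_A \<phi>v x B)
             \<and> Pinf_obj \<gamma> (embed_beta \<phi>m x \<alpha>) (embed_A \<phi>v x B) = Pinf_val \<gamma> \<phi>m \<phi>v x y))"
proof -
  have Km: "Km = feature_kernel \<phi>m" and Kv: "Kv = feature_kernel \<phi>v"
    using Km_feat Kv_feat by (simp_all add: fun_eq_iff)
  have val: "Pn_val \<gamma> Km Kv x y = Pinf_val \<gamma> \<phi>m \<phi>v x y"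
    unfolding Km Kv by (rule Pn_val_eq_Pinf_val[OF gamma_nonneg])
  have embed: "Pinf_feasible \<phi>m \<phi>v x y (embed_beta \<phi>m x \<alpha>) (embed_A \<phi>v x B)
      \<and> Pinf_obj \<gamma> (embed_beta \<phi>m x \<alpha>) (embed_A \<phi>v x B) = ereal (Pn_obj \<gamma> Km Kv x \<alpha> B)"
    if "Pn_feasible Km Kv x y \<alpha> B" for \<alpha> B
    using Pn_feasible_embed that unfolding Km Kv by blast
  have optimum: "\<exists>\<alpha> B. transpose B = B
      \<and> Pinf_feasible \<phi>m \<phi>v x y (embed_beta \<phi>m x \<alpha>) (embed_A \<phi>v x B)
      \<and> Pinf_obj \<gamma> (embed_beta \<phi>m x \<alpha>) (embed_A \<phi>v x B) = Pinf_val \<gamma> \<phi>m \<phi>v x y"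
    if P0: "Pinf_feasible \<phi>m \<phi>v x y \<beta>0 A0" for \<beta>0 A0
  proof -
    obtain \<alpha> B where F: "Pn_feasible Km Kv x y \<alpha> B"
      and opt: "ereal (Pn_obj \<gamma> Km Kv x \<alpha> B) = Pn_val \<gamma> Km Kv x y"
      using Pn_val_attained[OF gamma_nonneg P0] unfolding Km Kv by blast
    have "transpose B = B"
      using F by (simp add: Pn_feasible_def psd_mat_def)
    with embed[OF F] opt val show ?thesis
      by auto
  qed
  show ?thesis
    using val embed optimum by auto
qed

end
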